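(* Let $\alpha>-1$ and let $U_\alpha=P_\alpha[\chi]$, where $\chi(\zeta)=1$ for $\zeta\in\mathbb{T}$ with $\operatorname{Im}\zeta>0$ and $\chi(\zeta)=-1$ for $\operatorname{Im}\zeta<0$. Let $u=P_\alpha[u^\ast]$ be a real-valued $\alpha$-harmonic function with $u^\ast$ real, $|u^\ast|\le 1$ a.e. on $\mathbb{T}$, and $u(0)=0$. Then for every $z\in\mathbb{D}$, $u(z)\le U_\alpha(i|z|)$, and $$U_\alpha(ir)=\frac{c_\alpha}{2\pi}\cdot\frac{4(2+\alpha)(1-r^2)^{1+\alpha}r}{(1+r^2)^{2+\frac{\alpha}{2}}}\;{}_3F_2\!\left(\begin{matrix}1,\ 1+\frac{\alpha}{4},\ \frac32+\frac{\alpha}{4}\\ \frac32,\ \frac32\end{matrix};\frac{4r^2}{(1+r^2)^2}\right),\qquad 0\le r<1.$$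
   Context: $\mathbb{D}$ is the open unit disk, $\mathbb{T}=\partial\mathbb{D}$. For $\alpha>-1$ let $c_\alpha=\frac{\Gamma(1+\alpha/2)^2}{\Gamma(1+\alpha)}$, $K_\alpha(z)=c_\alpha\frac{(1-|z|^2)^{\alpha+1}}{|1-z|^{\alpha+2}}$, and $P_\alpha[g](z)=\frac{1}{2\pi}\int_0^{2\pi}K_\alpha(ze^{-it})g(e^{it})\,dt$. ${}_3F_2$ is the generalized hypergeometric series $\sum_{k\ge0}\frac{(a_1)_k(a_2)_k(a_3)_k}{(b_1)_k(b_2)_k\,k!}x^k$, $(y)_k=\Gamma(y+k)/\Gamma(y)$. *)

theory Defs
  imports "HOL-Analysis.Analysis"
begin

definition c_alpha :: "real \<Rightarrow> real" where
  "c_alpha \<alpha> = Gamma (1 + \<alpha>/2) ^ 2 / Gamma (1 + \<alpha>)"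

definition K_alpha :: "real \<Rightarrow> complex \<Rightarrow> real" where
  "K_alpha \<alpha> z = c_alpha \<alpha> * (1 - (cmod z)^2) powr (\<alpha> + 1) / (cmod (1 - z)) powr (\<alpha> + 2)"

definition P_alpha :: "real \<Rightarrow> (complex \<Rightarrow> real) \<Rightarrow> complex \<Rightarrow> real" where
  "P_alpha \<alpha> g z = 1 / (2*pi) *
     (LINT t:{0..2*pi}|lborel. K_alpha \<alpha> (z * cis (-t)) * g (cis t))"

definition chi :: "complex \<Rightarrow> real" where
  "chi \<zeta> = (if Im \<zeta> > 0 then 1 else if Im \<zeta> < 0 then -1 else 0)"

definition hyp3F2 :: "real \<Rightarrow> real \<Rightarrow> real \<Rightarrow> real \<Rightarrow> real \<Rightarrow> real \<Rightarrow> real" where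
  "hyp3F2 a1 a2 a3 b1 b2 x =
     (\<Sum>k. pochhammer a1 k * pochhammer a2 k * pochhammer a3 k /
          (pochhammer b1 k * pochhammer b2 k * fact k) * x ^ k)"

end

theory Submission
  imports Defs
begin

text \<open>
  Write \<open>z = r e\<^sup>i\<^sup>\<theta>\<close>. The kernel \<open>t \<mapsto> K\<^sub>\<alpha>(z e\<^sup>-\<^sup>i\<^sup>t)\<close> is an increasing function
  \<open>k(cos(t - \<theta>))\<close> of the cosine. Since \<open>u\<^sup>*\<close> has mean zero, subtracting the constant
  \<open>m = k(0)\<close> does not change \<open>u(z)\<close>, and \<open>|u\<^sup>*| \<le> 1\<close> gives
  \<open>2\<pi> u(z) \<le> \<integral> |k(cos(t - \<theta>)) - m| dt\<close>. By periodicity this integral does not depend on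
  \<open>\<theta>\<close>; for \<open>\<theta> = \<pi>/2\<close> the sign of \<open>k(sin t) - m\<close> is the sign of \<open>sin t\<close>, i.e. \<open>\<chi>(e\<^sup>i\<^sup>t)\<close>,
  so the bound equals \<open>2\<pi> U\<^sub>\<alpha>(ir)\<close>.

  For the closed form, \<open>k(sin t)\<close> is a multiple of \<open>(1 - x sin t)\<^sup>-\<^sup>\<beta>\<close> with \<open>x = 2r/(1+r\<^sup>2)\<close>
  and \<open>\<beta> = 1 + \<alpha>/2\<close>. Expanding binomially and integrating termwise, even powers of the sine
  cancel between the upper and lower half circle, and the Wallis integrals of the odd powers
  combine with the duplication formula for Pochhammer symbols into the \<open>\<^sub>3F\<^sub>2\<close> series.
\<close>

lemma integral_sin_power_Suc_Suc:
  fixes a b :: real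
  assumes "a \<le> b" "sin a = 0" "sin b = 0"
  shows "integral {a..b} (\<lambda>t. sin t ^ (n+2)) =
           (real n + 1) / (real n + 2) * integral {a..b} (\<lambda>t. sin t ^ n)"
proof -
  let ?F = "\<lambda>t. - (sin t ^ (n+1) * cos t)"
  let ?f = "\<lambda>t. (real n + 2) * sin t ^ (n+2) - (real n + 1) * sin t ^ n"
  have "(?F has_real_derivative ?f t) (at t)" for t
  proof -
    have "x * (sin t * sin t) + x * (cos t * cos t) = x" for x
      by (metis distrib_left mult.right_neutral power2_eq_square sin_cos_squared_add)
    then have cos_sq: "cos t * (cos t * x) = x - sin t * (sin t * x)" for x
      by (simp add: algebra_simps)
    show ?thesis
      by (rule derivative_eq_intros refl)+ (simp add: algebra_simps power2_eq_square cos_sq)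
  qed
  then have "(?f has_integral (?F b - ?F a)) {a..b}"
    using assms(1) by (intro fundamental_theorem_of_calculus)
      (auto simp: has_real_derivative_iff_has_vector_derivative[symmetric] has_field_derivative_at_within)
  then have "integral {a..b} ?f = 0"
    using assms by (simp add: integral_unique)
  moreover have "integral {a..b} ?f = (real n + 2) * integral {a..b} (\<lambda>t. sin t ^ (n+2))
                   - (real n + 1) * integral {a..b} (\<lambda>t. sin t ^ n)"
    by (subst integral_diff) (auto intro!: integrable_continuous_interval continuous_intros)
  ultimately show ?thesis by (simp add: field_simps)
qed

lemma integral_sin_power_pi_2pi:
  "integral {pi..2*pi} (\<lambda>t. sin t ^ n) = (-1)^n * integral {0..pi} (\<lambda>t. sin t ^ n)"
proof -
  have "integral {pi..2*pi} (\<lambda>t. sin t ^ n) = integral {pi-pi..2*pi-pi} (\<lambda>t. sin (t + pi) ^ n)"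
    by (rule integral_shift_real_ivl[symmetric])
  also have "\<dots> = integral {0..pi} (\<lambda>t. (-1)^n * sin t ^ n)"
    by (simp flip: power_mult_distrib)
  finally show ?thesis by simp
qed

lemma integral_sin_power_odd:
  "integral {0..pi} (\<lambda>t. sin t ^ (2*k+1)) = 2 * fact k / pochhammer (3/2) k"
proof (induction k)
  case 0
  have "((\<lambda>t. sin t) has_integral (- cos pi - - cos 0)) {0..pi}"
    by (intro fundamental_theorem_of_calculus)
      (auto intro!: derivative_eq_intros
        simp: has_real_derivative_iff_has_vector_derivative[symmetric] has_field_derivative_at_within)
  then show ?case by (simp add: integral_unique)
next
  case (Suc k)
  have "integral {0..pi} (\<lambda>t. sin t ^ (2 * Suc k + 1))
          = (2*k+2) / (2*k+3) * integral {0..pi} (\<lambda>t. sin t ^ (2*k+1))"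
    using integral_sin_power_Suc_Suc[of 0 pi "2*k+1"] by (simp add: add_ac)
  also have "\<dots> = 2 * fact (Suc k) / pochhammer (3/2) (Suc k)"
    unfolding Suc.IH using pochhammer_pos[of "3/2::real" k]
    by (simp add: pochhammer_Suc field_simps)
  finally show ?case .
qed

lemma pochhammer_odd_div_fact:
  fixes \<beta> :: real
  shows "pochhammer \<beta> (2*k+1) / fact (2*k+1) =
           \<beta> * pochhammer ((\<beta>+1)/2) k * pochhammer ((\<beta>+2)/2) k / (fact k * pochhammer (3/2) k)"
proof -
  have "2 * ((\<beta>+1)/2) = \<beta>+1" "(\<beta>+1)/2 + 1/2 = (\<beta>+2)/2"
    by simp_all
  from pochhammer_double[of "(\<beta>+1)/2" k, unfolded this]
  have num: "pochhammer \<beta> (2*k+1) = \<beta> * 4^k * pochhammer ((\<beta>+1)/2) k * pochhammer ((\<beta>+2)/2) k"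
    by (simp add: pochhammer_rec power_mult)
  have den: "fact (2*k+1) = (4^k * fact k * pochhammer (3/2) k :: real)"
    using pochhammer_double[of "1::real" k]
    by (simp add: pochhammer_rec pochhammer_fact power_mult)
  show ?thesis
    unfolding num den using pochhammer_pos[of "3/2::real" k] by simp
qed

lemma pochhammer_binomial_sums:
  fixes y \<beta> :: real
  assumes "\<bar>y\<bar> < 1"
  shows "(\<lambda>n. pochhammer \<beta> n / fact n * y^n) sums (1 - y) powr (-\<beta>)"
proof -
  have "(\<lambda>n. ((-\<beta>) gchoose n) * (-y)^n) sums (1 + -y) powr (-\<beta>)"
    by (rule gen_binomial_real) (use assms in simp)
  moreover have "((-\<beta>) gchoose n) * (-y)^n = pochhammer \<beta> n / fact n * y^n" for n
  proof -
    have "((-\<beta>) gchoose n) * (-y)^n = ((-1)^n * (-1)^n) * (pochhammer \<beta> n / fact n * y^n)"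
      by (simp add: gbinomial_pochhammer power_minus[of y])
    also have "(-1::real)^n * (-1)^n = 1"
      by (simp flip: power_mult_distrib)
    finally show ?thesis by simp
  qed
  ultimately show ?thesis by simp
qed

lemma integral_powr_sums:
  fixes x \<beta> a b :: real and h :: "real \<Rightarrow> real"
  assumes x: "0 \<le> x" "x < 1" and \<beta>: "\<beta> > 0"
    and h: "continuous_on {a..b} h" "\<And>t. t \<in> {a..b} \<Longrightarrow> \<bar>h t\<bar> \<le> 1"
  shows "(\<lambda>n. pochhammer \<beta> n / fact n * x^n * integral {a..b} (\<lambda>t. h t ^ n))
           sums integral {a..b} (\<lambda>t. (1 - x * h t) powr (-\<beta>))"
proof -
  define c where "c n = pochhammer \<beta> n / fact n * x^n" for n
  have c_nonneg: "c n \<ge> 0" for n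
    unfolding c_def using \<beta> x by (intro mult_nonneg_nonneg divide_nonneg_pos pochhammer_nonneg) auto
  have "summable c"
    unfolding c_def using pochhammer_binomial_sums[of x \<beta>] x by (simp add: sums_iff)
  moreover have "norm (c n * h t ^ n) \<le> c n" if "t \<in> {a..b}" for n t
  proof -
    have "\<bar>h t ^ n\<bar> \<le> 1"
      using h(2)[OF that] by (simp add: power_abs power_le_one)
    then show ?thesis
      using c_nonneg[of n] by (simp add: abs_mult mult_left_le)
  qed
  ultimately have unif: "uniform_limit {a..b} (\<lambda>N t. \<Sum>n<N. c n * h t ^ n)
                           (\<lambda>t. \<Sum>n. c n * h t ^ n) sequentially"
    by (intro Weierstrass_m_test) auto
  have "continuous_on {a..b} (\<lambda>t. \<Sum>n<N. c n * h t ^ n)" for N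
    by (intro continuous_intros h(1))
  from uniform_limit_integral[OF unif this] obtain I J
    where I: "\<And>N. ((\<lambda>t. \<Sum>n<N. c n * h t ^ n) has_integral I N) {a..b}"
      and J: "((\<lambda>t. \<Sum>n. c n * h t ^ n) has_integral J) {a..b}"
      and IJ: "I \<longlonglongrightarrow> J"
    by auto
  have "I = (\<lambda>N. \<Sum>n<N. c n * integral {a..b} (\<lambda>t. h t ^ n))"
  proof
    fix N
    have "((\<lambda>t. \<Sum>n<N. c n * h t ^ n) has_integral (\<Sum>n<N. c n * integral {a..b} (\<lambda>t. h t ^ n))) {a..b}"
      by (intro has_integral_sum has_integral_mult_right integrable_integral
          integrable_continuous_interval continuous_intros h(1)) auto
    then show "I N = (\<Sum>n<N. c n * integral {a..b} (\<lambda>t. h t ^ n))"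
      using I[of N] by (rule has_integral_unique[symmetric])
  qed
  moreover have "(\<Sum>n. c n * h t ^ n) = (1 - x * h t) powr (-\<beta>)" if "t \<in> {a..b}" for t
  proof -
    have "\<bar>x * h t\<bar> \<le> x"
      using x h(2)[OF that] by (simp add: abs_mult mult_left_le)
    then have "\<bar>x * h t\<bar> < 1"
      using x by linarith
    from pochhammer_binomial_sums[OF this, of \<beta>] show ?thesis
      by (simp add: sums_iff c_def power_mult_distrib mult.assoc)
  qed
  then have "J = integral {a..b} (\<lambda>t. (1 - x * h t) powr (-\<beta>))"
    using J by (metis (no_types, lifting) integral_cong integral_unique)
  ultimately show ?thesis
    using IJ unfolding sums_def c_def by simp
qed

lemma half_period_difference_hyp3F2:
  fixes x \<beta> :: real
  assumes x: "0 \<le> x" "x < 1" and \<beta>: "\<beta> > 0"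
  shows "integral {0..pi} (\<lambda>t. (1 - x * sin t) powr (-\<beta>))
           - integral {pi..2*pi} (\<lambda>t. (1 - x * sin t) powr (-\<beta>))
         = 4 * \<beta> * x * hyp3F2 1 ((\<beta>+1)/2) ((\<beta>+2)/2) (3/2) (3/2) (x^2)"
    (is "?D = _")
proof -
  define F where "F n = pochhammer \<beta> n / fact n * x^n * integral {0..pi} (\<lambda>t. sin t ^ n)
      - pochhammer \<beta> n / fact n * x^n * ((-1)^n * integral {0..pi} (\<lambda>t. sin t ^ n))" for n
  define h where "h k = pochhammer 1 k * pochhammer ((\<beta>+1)/2) k * pochhammer ((\<beta>+2)/2) k /
          (pochhammer (3/2) k * pochhammer (3/2) k * fact k) * (x^2)^k" for k
  have "F sums ?D"
  proof -
    have "(\<lambda>n. pochhammer \<beta> n / fact n * x^n * integral {0..pi} (\<lambda>t. sin t ^ n)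
             - pochhammer \<beta> n / fact n * x^n * integral {pi..2*pi} (\<lambda>t. sin t ^ n)) sums ?D"
      using x \<beta> by (intro sums_diff integral_powr_sums continuous_intros) auto
    then show ?thesis
      unfolding integral_sin_power_pi_2pi F_def .
  qed
  moreover have "strict_mono (\<lambda>k::nat. 2*k+1)"
    by (rule strict_monoI) simp
  moreover have "F n = 0" if "n \<notin> range (\<lambda>k::nat. 2*k+1)" for n
  proof -
    have "even n"
      using that by (metis oddE rangeI)
    then show ?thesis
      by (simp add: F_def)
  qed
  ultimately have "(\<lambda>k. F (2*k+1)) sums ?D"
    using sums_mono_reindex by blast
  moreover have "F (2*k+1) = 4 * \<beta> * x * h k" for k
  proof -
    have "F (2*k+1) = 2 * x * (x^2)^k * (pochhammer \<beta> (2*k+1) / fact (2*k+1))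
                        * integral {0..pi} (\<lambda>t. sin t ^ (2*k+1))"
      unfolding F_def by (simp add: power_mult power2_eq_square algebra_simps)
    also have "\<dots> = 4 * \<beta> * x * h k"
      unfolding pochhammer_odd_div_fact integral_sin_power_odd h_def pochhammer_fact[symmetric]
      using pochhammer_pos[of "3/2::real" k] by (simp add: power2_eq_square field_simps)
    finally show ?thesis .
  qed
  ultimately have "(\<lambda>k. 4 * \<beta> * x * h k) sums ?D"
    by simp
  then have "?D = 4 * \<beta> * x * suminf h"
  proof (cases "x = 0")
    case False
    assume sums: "(\<lambda>k. 4 * \<beta> * x * h k) sums ?D"
    then have "summable h"
      using False \<beta> by (simp add: sums_iff summable_cmult_iff)
    from sums_unique[OF sums] suminf_mult[OF this] show ?thesis
      by simp
  qed (simp add: sums_iff)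
  then show ?thesis
    unfolding h_def hyp3F2_def .
qed

lemma integral_periodic_shift:
  fixes g :: "real \<Rightarrow> real"
  assumes g: "continuous_on UNIV g" and per: "\<And>t. g (t + T) = g t"
    and c: "-T \<le> c" "c \<le> T"
  shows "integral {0..T} (\<lambda>t. g (t + c)) = integral {0..T} g"
proof -
  have int: "g integrable_on {a..b}" for a b
    by (rule integrable_continuous_interval) (rule continuous_on_subset[OF g], simp)
  have nonneg_shift: "integral {0..T} (\<lambda>t. g (t + d)) = integral {0..T} g"
    if d: "0 \<le> d" "d \<le> T" for d
  proof -
    have "integral {0..T} (\<lambda>t. g (t + d)) = integral {d..T+d} g"
      using integral_shift_real_ivl[where a=d and b="T+d" and c=d and f=g] by simp
    also have "\<dots> = integral {d..T} g + integral {T..T+d} g"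
      using d by (intro Henstock_Kurzweil_Integration.integral_combine[symmetric] int) auto
    also have "integral {T..T+d} g = integral {0..d} (\<lambda>t. g (t + T))"
      using integral_shift_real_ivl[where a=T and b="T+d" and c=T and f=g] by simp
    also have "\<dots> = integral {0..d} g"
      using per by simp
    also have "integral {d..T} g + integral {0..d} g = integral {0..T} g"
      using d Henstock_Kurzweil_Integration.integral_combine[of 0 d T g] int by simp
    finally show ?thesis .
  qed
  show ?thesis
  proof (cases "c \<ge> 0")
    case True
    then show ?thesis using nonneg_shift c by simp
  next
    case False
    have "(\<lambda>t. g (t + c)) = (\<lambda>t. g (t + (c + T)))"
      using per by (metis add.assoc)
    then show ?thesis using nonneg_shift[of "c + T"] c False by simp
  qed
qed

lemma c_alpha_pos:
  assumes "(\<alpha>::real) > -1" shows "c_alpha \<alpha> > 0"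
proof -
  have "Gamma (1 + \<alpha>/2) > 0" "Gamma (1 + \<alpha>) > 0"
    using assms by auto
  then show ?thesis by (simp add: c_alpha_def)
qed

definition radial_kernel :: "real \<Rightarrow> real \<Rightarrow> real \<Rightarrow> real" where
  "radial_kernel \<alpha> r y = c_alpha \<alpha> * (1 - r^2) powr (\<alpha>+1) / (1 + r^2 - 2*r*y) powr (1 + \<alpha>/2)"

lemma K_alpha_eq:
  "K_alpha \<alpha> w = c_alpha \<alpha> * (1 - (cmod w)^2) powr (\<alpha> + 1) / (1 + (cmod w)^2 - 2 * Re w) powr (1 + \<alpha>/2)"
proof -
  have sq: "(cmod (1 - w))^2 = 1 + (cmod w)^2 - 2 * Re w"
    unfolding cmod_power2 by (simp add: power2_eq_square algebra_simps)
  have "cmod (1 - w) powr (\<alpha> + 2) = ((cmod (1 - w))^2) powr (1 + \<alpha>/2)"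
  proof (cases "cmod (1 - w) = 0")
    case False
    then have "(cmod (1 - w))^2 = cmod (1 - w) powr 2"
      by (simp add: powr_realpow)
    then have "((cmod (1 - w))^2) powr (1 + \<alpha>/2) = cmod (1 - w) powr (2 * (1 + \<alpha>/2))"
      by (simp only: powr_powr)
    then show ?thesis by (simp add: algebra_simps)
  qed simp
  then show ?thesis unfolding K_alpha_def sq by simp
qed

lemma K_alpha_rotate: "K_alpha \<alpha> (z * cis (-t)) = radial_kernel \<alpha> (cmod z) (cos (t - Arg z))"
proof -
  have "z * cis (-t) = complex_of_real (cmod z) * cis (Arg z - t)"
    by (subst (1) rcis_cmod_Arg[symmetric]) (simp add: rcis_def cis_mult)
  then have "Re (z * cis (-t)) = cmod z * cos (t - Arg z)" "cmod (z * cis (-t)) = cmod z"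
    by (simp_all add: cos_diff norm_mult)
  then show ?thesis unfolding K_alpha_eq radial_kernel_def by (simp add: algebra_simps)
qed

lemma K_alpha_imaginary_rotate:
  assumes "r \<ge> 0"
  shows "K_alpha \<alpha> (\<i> * complex_of_real r * cis (-t)) = radial_kernel \<alpha> r (sin t)"
proof -
  have "Re (\<i> * complex_of_real r * cis (-t)) = r * sin t"
    by (simp add: cis.ctr)
  moreover have "cmod (\<i> * complex_of_real r * cis (-t)) = r"
    using assms by (simp add: norm_mult)
  ultimately show ?thesis unfolding K_alpha_eq radial_kernel_def by (simp add: algebra_simps)
qed

lemma radial_kernel_denom_pos:
  fixes r y :: real
  assumes "0 \<le> r" "r < 1" "\<bar>y\<bar> \<le> 1"
  shows "1 + r^2 - 2*r*y > 0"
proof -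
  have "r*y \<le> r"
    using assms mult_left_mono[of y 1 r] by (simp add: abs_le_iff)
  moreover have "(1 - r)^2 > 0"
    using assms by simp
  ultimately show ?thesis by (simp add: power2_eq_square algebra_simps)
qed

lemma radial_kernel_mono:
  assumes "\<alpha> > -1" "0 \<le> r" "r < 1" "\<bar>y1\<bar> \<le> 1" "\<bar>y2\<bar> \<le> 1" "y1 \<le> y2"
  shows "radial_kernel \<alpha> r y1 \<le> radial_kernel \<alpha> r y2"
proof -
  have "c_alpha \<alpha> * (1 - r^2) powr (\<alpha>+1) \<ge> 0"
    using c_alpha_pos[OF assms(1)] by simp
  moreover have pos: "1 + r^2 - 2*r * y1 > 0" "1 + r^2 - 2*r * y2 > 0"
    using radial_kernel_denom_pos assms by auto
  moreover have "1 + r^2 - 2*r * y2 \<le> 1 + r^2 - 2*r * y1"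
    using assms mult_left_mono[of y1 y2 "2*r"] by auto
  then have "(1 + r^2 - 2*r * y2) powr (1 + \<alpha>/2) \<le> (1 + r^2 - 2*r * y1) powr (1 + \<alpha>/2)"
    using pos assms by (intro powr_mono2) auto
  ultimately show ?thesis
    unfolding radial_kernel_def by (intro divide_left_mono) auto
qed

lemma continuous_on_radial_kernel:
  assumes "0 \<le> r" "r < 1" "continuous_on UNIV h" "\<And>t. \<bar>h t\<bar> \<le> 1"
  shows "continuous_on UNIV (\<lambda>t. radial_kernel \<alpha> r (h t))"
proof -
  have pos: "1 + r^2 - 2*r*h t \<noteq> 0" for t
    using radial_kernel_denom_pos[OF assms(1,2) assms(4)[of t]] by linarith
  then have "(1 + r^2 - 2*r*h t) powr (1 + \<alpha>/2) \<noteq> 0" for t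
    by simp
  with pos show ?thesis
    unfolding radial_kernel_def by (intro continuous_intros assms(3)) blast+
qed

lemma borel_measurable_chi_cis: "(\<lambda>t. chi (cis t)) \<in> borel_measurable borel"
proof -
  have "(\<lambda>t. chi (cis t)) = (\<lambda>t. if sin t > 0 then 1 else if sin t < 0 then -1 else (0::real))"
    by (simp add: chi_def fun_eq_iff)
  also have "\<dots> \<in> borel_measurable borel"
    by measurable
  finally show ?thesis .
qed

lemma set_integral_mult_chi_cis:
  fixes f :: "real \<Rightarrow> real"
  assumes f: "continuous_on UNIV f"
  shows "(LINT t:{0..2*pi}|lborel. f t * chi (cis t)) = integral {0..pi} f - integral {pi..2*pi} f"
proof -
  have f_int: "set_integrable lborel {a..b} f" for a b
    by (rule borel_integrable_atLeastAtMost'[OF continuous_on_subset[OF f subset_UNIV]])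
  have "f \<in> borel_measurable borel"
    by (rule borel_measurable_continuous_onI[OF f])
  then have "set_integrable lborel {0..2*pi} (\<lambda>t. f t * chi (cis t))"
  proof (intro set_integrable_bound[OF f_int])
    show "set_borel_measurable lborel {0..2*pi} (\<lambda>t. f t * chi (cis t))"
      if "f \<in> borel_measurable borel"
      unfolding set_borel_measurable_def using that borel_measurable_chi_cis by measurable
    show "AE t in lborel. t \<in> {0..2*pi} \<longrightarrow> norm (f t * chi (cis t)) \<le> norm (f t)"
      by (simp add: chi_def abs_mult)
  qed
  then have "(LINT t:{0..2*pi}|lborel. f t * chi (cis t))
               = integral {0..pi} (\<lambda>t. f t * chi (cis t)) + integral {pi..2*pi} (\<lambda>t. f t * chi (cis t))"
    by (subst set_borel_integral_eq_integral(2))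
      (auto intro!: Henstock_Kurzweil_Integration.integral_combine[symmetric]
        dest!: set_borel_integral_eq_integral(1))
  also have "integral {0..pi} (\<lambda>t. f t * chi (cis t)) = integral {0..pi} f"
    by (rule integral_spike[of "{0,pi}"]) (auto simp: chi_def sin_gt_zero)
  also have "integral {pi..2*pi} (\<lambda>t. f t * chi (cis t)) = integral {pi..2*pi} (\<lambda>t. - f t)"
  proof (rule integral_spike[of "{pi,2*pi}"])
    show "- f t = f t * chi (cis t)" if "t \<in> {pi..2*pi} - {pi,2*pi}" for t
      using that sin_lt_zero[of t] by (simp add: chi_def)
  qed auto
  finally show ?thesis
    by (simp add: integral_neg)
qed

lemma P_alpha_chi_imaginary:
  assumes "0 \<le> r" "r < 1"
  shows "P_alpha \<alpha> chi (\<i> * complex_of_real r) = 1/(2*pi) *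
           (integral {0..pi} (\<lambda>t. radial_kernel \<alpha> r (sin t))
            - integral {pi..2*pi} (\<lambda>t. radial_kernel \<alpha> r (sin t)))"
  unfolding P_alpha_def K_alpha_imaginary_rotate[OF assms(1)]
  by (subst set_integral_mult_chi_cis)
    (auto intro!: continuous_on_radial_kernel[OF assms] continuous_intros)

lemma P_alpha_chi_imaginary_hyp3F2:
  fixes \<alpha> r :: real
  assumes \<alpha>: "\<alpha> > -1" and r: "0 \<le> r" "r < 1"
  shows "P_alpha \<alpha> chi (\<i> * complex_of_real r) =
           c_alpha \<alpha> / (2*pi) *
           (4 * (2 + \<alpha>) * (1 - r^2) powr (1 + \<alpha>) * r / (1 + r^2) powr (2 + \<alpha>/2)) *
           hyp3F2 1 (1 + \<alpha>/4) (3/2 + \<alpha>/4) (3/2) (3/2) (4 * r^2 / (1 + r^2)^2)"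
proof -
  define \<beta> where "\<beta> = 1 + \<alpha>/2"
  define x where "x = 2*r / (1 + r^2)"
  define C where "C = c_alpha \<alpha> * (1 - r^2) powr (\<alpha>+1) * (1 + r^2) powr (-\<beta>)"
  define H where "H = hyp3F2 1 (1 + \<alpha>/4) (3/2 + \<alpha>/4) (3/2) (3/2) (4 * r^2 / (1 + r^2)^2)"
  have \<beta>: "\<beta> > 0"
    using \<alpha> unfolding \<beta>_def by simp
  have q: "1 + r^2 > 0"
    by (simp add: add_pos_nonneg)
  have x: "0 \<le> x" "x < 1"
  proof -
    show "0 \<le> x" unfolding x_def using r by simp
    have "(1 - r)^2 > 0" using r by simp
    then have "2*r < 1 + r^2" by (simp add: power2_eq_square algebra_simps)
    then show "x < 1" unfolding x_def using q by simp
  qed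
  have kernel: "radial_kernel \<alpha> r (sin t) = C * (1 - x * sin t) powr (-\<beta>)" for t
  proof -
    have b: "1 + r^2 - 2*r * sin t = (1 + r^2) * (1 - x * sin t)"
      unfolding x_def using q by (simp add: field_simps)
    have "1 - x * sin t > 0"
      using radial_kernel_denom_pos[OF r, of "sin t"] q unfolding b by (simp add: zero_less_mult_iff)
    then have "(1 + r^2 - 2*r * sin t) powr \<beta> = (1 + r^2) powr \<beta> * (1 - x * sin t) powr \<beta>"
      unfolding b using q by (simp add: powr_mult)
    then show ?thesis
      unfolding radial_kernel_def C_def \<beta>_def[symmetric] by (simp add: powr_minus divide_inverse)
  qed
  have "P_alpha \<alpha> chi (\<i> * complex_of_real r) = 1/(2*pi) * (C *
          (integral {0..pi} (\<lambda>t. (1 - x * sin t) powr (-\<beta>))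
           - integral {pi..2*pi} (\<lambda>t. (1 - x * sin t) powr (-\<beta>))))"
    unfolding P_alpha_chi_imaginary[OF r] kernel by (simp add: right_diff_distrib)
  also have "\<dots> = 1/(2*pi) * (C * (4 * \<beta> * x * H))"
  proof -
    have params: "(\<beta>+1)/2 = 1 + \<alpha>/4" "(\<beta>+2)/2 = 3/2 + \<alpha>/4" "x^2 = 4 * r^2 / (1 + r^2)^2"
      unfolding \<beta>_def x_def by (simp_all add: power_divide field_simps)
    show ?thesis
      using half_period_difference_hyp3F2[OF x \<beta>] unfolding params H_def by simp
  qed
  also have "\<dots> = c_alpha \<alpha> / (2*pi) *
           (4 * (2 + \<alpha>) * (1 - r^2) powr (1 + \<alpha>) * r / (1 + r^2) powr (2 + \<alpha>/2)) * H"
  proof -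
    define P where "P = (1 + r^2) powr \<beta>"
    have "P > 0"
      using q by (simp add: P_def)
    have "2 + \<alpha>/2 = 1 + \<beta>"
      unfolding \<beta>_def by simp
    then have "(1 + r^2) powr (2 + \<alpha>/2) = (1 + r^2) powr 1 * P"
      unfolding P_def by (simp only: powr_add)
    then have denom: "(1 + r^2) powr (2 + \<alpha>/2) = (1 + r^2) * P"
      using q by simp
    have C_eq: "C = c_alpha \<alpha> * (1 - r^2) powr (1 + \<alpha>) / P"
      unfolding C_def P_def by (simp add: powr_minus divide_inverse add.commute)
    have \<beta>_eq: "\<beta> = (2 + \<alpha>) / 2"
      unfolding \<beta>_def by simp
    show ?thesis
      unfolding denom C_eq x_def \<beta>_eq using \<open>P > 0\<close> q by (simp add: divide_simps)
  qed
  finally show ?thesis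
    unfolding H_def .
qed

lemma set_integral_mult_mean_zero_le:
  fixes k u :: "real \<Rightarrow> real" and m :: real
  assumes k: "continuous_on UNIV k" and u: "u \<in> borel_measurable lborel"
    and bound: "AE t in lborel. t \<in> {a..b} \<longrightarrow> \<bar>u t\<bar> \<le> 1"
    and mean: "(LINT t:{a..b}|lborel. u t) = 0"
  shows "(LINT t:{a..b}|lborel. k t * u t) \<le> integral {a..b} (\<lambda>t. \<bar>k t - m\<bar>)"
proof -
  have int: "set_integrable lborel {a..b} f" if "continuous_on UNIV f" for f :: "real \<Rightarrow> real"
    by (rule borel_integrable_atLeastAtMost'[OF continuous_on_subset[OF that subset_UNIV]])
  have int_u: "set_integrable lborel {a..b} (\<lambda>t. f t * u t)" if f: "continuous_on UNIV f" for f
  proof (rule set_integrable_bound[OF int[OF f]])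
    have "f \<in> borel_measurable borel" "u \<in> borel_measurable borel"
      using borel_measurable_continuous_onI[OF f] u by simp_all
    then show "set_borel_measurable lborel {a..b} (\<lambda>t. f t * u t)"
      unfolding set_borel_measurable_def by measurable
    show "AE t in lborel. t \<in> {a..b} \<longrightarrow> norm (f t * u t) \<le> norm (f t)"
      using bound by eventually_elim (auto simp: abs_mult intro: mult_left_le)
  qed
  have dev: "continuous_on UNIV (\<lambda>t. \<bar>k t - m\<bar>)"
    by (intro continuous_intros k)
  have "(LINT t:{a..b}|lborel. k t * u t) \<le> (LINT t:{a..b}|lborel. \<bar>k t - m\<bar> + m * u t)"
  proof (rule set_integral_mono_AE)
    show "set_integrable lborel {a..b} (\<lambda>t. k t * u t)"
      by (rule int_u[OF k])
    show "set_integrable lborel {a..b} (\<lambda>t. \<bar>k t - m\<bar> + m * u t)"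
      using int_u[of "\<lambda>_. m"] int[OF dev] by (intro set_integral_add) auto
    show "AE t\<in>{a..b} in lborel. k t * u t \<le> \<bar>k t - m\<bar> + m * u t"
      using bound
    proof eventually_elim
      case (elim t)
      show ?case
      proof
        assume "t \<in> {a..b}"
        with elim have "\<bar>(k t - m) * u t\<bar> \<le> \<bar>k t - m\<bar>"
          by (simp add: abs_mult mult_left_le)
        then show "k t * u t \<le> \<bar>k t - m\<bar> + m * u t"
          by (simp add: algebra_simps abs_le_iff)
      qed
    qed
  qed
  also have "\<dots> = (LINT t:{a..b}|lborel. \<bar>k t - m\<bar>)"
    using int_u[of "\<lambda>_. m"] int[OF dev] mean by (subst set_integral_add(2)) auto
  also have "\<dots> = integral {a..b} (\<lambda>t. \<bar>k t - m\<bar>)"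
    by (rule set_borel_integral_eq_integral(2)[OF int[OF dev]])
  finally show ?thesis .
qed

lemma integral_abs_radial_kernel_deviation:
  assumes \<alpha>: "\<alpha> > -1" and r: "0 \<le> r" "r < 1" and \<theta>: "\<bar>\<theta>\<bar> \<le> 2*pi"
  shows "integral {0..2*pi} (\<lambda>t. \<bar>radial_kernel \<alpha> r (cos (t - \<theta>)) - radial_kernel \<alpha> r 0\<bar>)
           = integral {0..pi} (\<lambda>t. radial_kernel \<alpha> r (sin t))
             - integral {pi..2*pi} (\<lambda>t. radial_kernel \<alpha> r (sin t))"
proof -
  define m where "m = radial_kernel \<alpha> r 0"
  define k where "k t = radial_kernel \<alpha> r (sin t)" for t
  have k_cont: "continuous_on UNIV k"
    unfolding k_def by (rule continuous_on_radial_kernel[OF r]) (auto intro!: continuous_intros)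
  have int: "f integrable_on {a..b}" if "continuous_on UNIV f" for f :: "real \<Rightarrow> real" and a b
    by (rule integrable_continuous_interval) (rule continuous_on_subset[OF that], simp)
  \<comment> \<open>rotate the kernel's peak from angle \<open>\<theta>\<close> to \<open>pi/2\<close>\<close>
  have "integral {0..2*pi} (\<lambda>t. \<bar>radial_kernel \<alpha> r (cos (t - \<theta>)) - m\<bar>) = integral {0..2*pi} (\<lambda>t. \<bar>k t - m\<bar>)"
  proof -
    define G where "G t = \<bar>radial_kernel \<alpha> r (cos t) - m\<bar>" for t
    have G_cont: "continuous_on UNIV G"
      unfolding G_def by (intro continuous_intros continuous_on_radial_kernel[OF r]) auto
    have "G (t + 2*pi) = G t" for t
      unfolding G_def by simp
    note shift = integral_periodic_shift[OF G_cont this]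
    have "(\<lambda>t. \<bar>k t - m\<bar>) = (\<lambda>t. G (t + -(pi/2)))"
      unfolding G_def k_def by (simp add: cos_diff)
    then show ?thesis
      using shift[of "-\<theta>"] shift[of "-(pi/2)"] \<theta> unfolding G_def by simp
  qed
  also have "\<dots> = integral {0..pi} (\<lambda>t. \<bar>k t - m\<bar>) + integral {pi..2*pi} (\<lambda>t. \<bar>k t - m\<bar>)"
    by (intro Henstock_Kurzweil_Integration.integral_combine[symmetric] int continuous_intros k_cont) auto
  also have "integral {0..pi} (\<lambda>t. \<bar>k t - m\<bar>) = integral {0..pi} (\<lambda>t. k t - m)"
  proof (rule integral_cong)
    fix t assume "t \<in> {0..pi}"
    then have "0 \<le> sin t"
      by (auto intro: sin_ge_zero)
    then show "\<bar>k t - m\<bar> = k t - m"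
      unfolding m_def k_def using radial_kernel_mono[OF \<alpha> r, of 0 "sin t"] by simp
  qed
  also have "integral {pi..2*pi} (\<lambda>t. \<bar>k t - m\<bar>) = integral {pi..2*pi} (\<lambda>t. m - k t)"
  proof (rule integral_cong)
    fix t assume "t \<in> {pi..2*pi}"
    then have "sin t \<le> 0"
      by (cases "t = 2*pi") (auto intro: sin_le_zero)
    then show "\<bar>k t - m\<bar> = m - k t"
      unfolding m_def k_def using radial_kernel_mono[OF \<alpha> r, of "sin t" 0] by simp
  qed
  also have "integral {0..pi} (\<lambda>t. k t - m) + integral {pi..2*pi} (\<lambda>t. m - k t)
               = integral {0..pi} k - integral {pi..2*pi} k"
    by (subst (1 2) integral_diff) (auto intro!: int k_cont continuous_intros)
  finally show ?thesis
    unfolding m_def k_def .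
qed

lemma P_alpha_le_P_alpha_chi:
  fixes ustar :: "complex \<Rightarrow> real"
  assumes \<alpha>: "\<alpha> > -1"
    and meas: "(\<lambda>t. ustar (cis t)) \<in> borel_measurable lborel"
    and bound: "AE t in lborel. t \<in> {0..2*pi} \<longrightarrow> \<bar>ustar (cis t)\<bar> \<le> 1"
    and mean: "P_alpha \<alpha> ustar 0 = 0"
    and z: "cmod z < 1"
  shows "P_alpha \<alpha> ustar z \<le> P_alpha \<alpha> chi (\<i> * complex_of_real (cmod z))"
proof -
  define r where "r = cmod z"
  have r: "0 \<le> r" "r < 1"
    using z unfolding r_def by auto
  define k where "k t = radial_kernel \<alpha> r (cos (t - Arg z))" for t
  have k_cont: "continuous_on UNIV k"
    unfolding k_def by (rule continuous_on_radial_kernel[OF r]) (auto intro!: continuous_intros)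
  have "c_alpha \<alpha> / (2*pi) * (LINT t:{0..2*pi}|lborel. ustar (cis t)) = 0"
    using mean by (simp add: P_alpha_def K_alpha_def)
  then have "(LINT t:{0..2*pi}|lborel. ustar (cis t)) = 0"
    using c_alpha_pos[OF \<alpha>] by simp
  then have "(LINT t:{0..2*pi}|lborel. k t * ustar (cis t))
               \<le> integral {0..2*pi} (\<lambda>t. \<bar>k t - radial_kernel \<alpha> r 0\<bar>)"
    by (intro set_integral_mult_mean_zero_le k_cont meas bound)
  also have "\<dots> = integral {0..pi} (\<lambda>t. radial_kernel \<alpha> r (sin t))
                   - integral {pi..2*pi} (\<lambda>t. radial_kernel \<alpha> r (sin t))"
    unfolding k_def using Arg_bounded[of z] by (intro integral_abs_radial_kernel_deviation[OF \<alpha> r]) auto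
  finally have "1/(2*pi) * (LINT t:{0..2*pi}|lborel. k t * ustar (cis t))
                  \<le> P_alpha \<alpha> chi (\<i> * complex_of_real r)"
    unfolding P_alpha_chi_imaginary[OF r] by (intro mult_left_mono) auto
  then show ?thesis
    unfolding P_alpha_def K_alpha_rotate k_def r_def .
qed

theorem mainTheorem7:
  fixes \<alpha> :: real and ustar :: "complex \<Rightarrow> real"
  assumes "\<alpha> > -1"
    and "(\<lambda>t. ustar (cis t)) \<in> borel_measurable lborel"
    and "AE t in lborel. t \<in> {0..2*pi} \<longrightarrow> \<bar>ustar (cis t)\<bar> \<le> 1"
    and "P_alpha \<alpha> ustar 0 = 0"
  shows "(\<forall>z. cmod z < 1 \<longrightarrow>
            P_alpha \<alpha> ustar z \<le> P_alpha \<alpha> chi (\<i> * complex_of_real (cmod z)))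
       \<and> (\<forall>r::real. 0 \<le> r \<and> r < 1 \<longrightarrow>
            P_alpha \<alpha> chi (\<i> * complex_of_real r) =
              c_alpha \<alpha> / (2*pi) *
              (4 * (2 + \<alpha>) * (1 - r^2) powr (1 + \<alpha>) * r / (1 + r^2) powr (2 + \<alpha>/2)) *
              hyp3F2 1 (1 + \<alpha>/4) (3/2 + \<alpha>/4) (3/2) (3/2) (4 * r^2 / (1 + r^2)^2))"
  using P_alpha_le_P_alpha_chi[OF assms] P_alpha_chi_imaginary_hyp3F2[OF assms(1)] by blast

end
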